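(* Let $0\le \alpha<1$ and let $f=h+\overline{g}\in \mathcal{P}^{0}_{\mathcal{H}}(\alpha)$. Then for every $z\in\mathbb{D}$, $$|z|+\sum_{n=2}^{\infty}\frac{2(1-\alpha)(-1)^{n-1}}{n}|z|^{n}\;\le\; |f(z)|\;\le\; |z|+\sum_{n=2}^{\infty}\frac{2(1-\alpha)}{n}|z|^{n}.$$ Both inequalities are sharp: for $f_\alpha(z)=z+\sum_{n=2}^{\infty}\frac{2(1-\alpha)}{n}z^n$ (which belongs to $\mathcal{P}^{0}_{\mathcal{H}}(\alpha)$), equality holds in the right-hand inequality at $z=r$ and in the left-hand inequality at $z=-r$, for every $r\in[0,1)$.
   Context: $\mathbb{D}=\{z\in\mathbb{C}:|z|<1\}$. $\mathcal{H}_0$ denotes the class of harmonic functions $f=h+\overline{g}$ on $\mathbb{D}$, where $h,g$ are analytic in $\mathbb{D}$ of the form $h(z)=z+\sum_{n=2}^\infty a_nz^n$ and $g(z)=\sum_{n=2}^\infty b_nz^n$. For $0\le\alpha<1$, $\mathcal{P}^{0}_{\mathcal{H}}(\alpha)$ is the set of $f=h+\overline{g}\in\mathcal{H}_0$ such that $\operatorname{Re}(h'(z)-\alpha)>|g'(z)|$ for all $z\in\mathbb{D}$. *)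

theory Defs
  imports "HOL-Complex_Analysis.Complex_Analysis"
begin

text \<open>The class H_0: harmonic f = h + conj g on the unit disc with h, g analytic,
  h(z) = z + sum a_n z^n (n>=2), g(z) = sum b_n z^n (n>=2), i.e.
  h(0) = 0, h'(0) = 1, g(0) = 0, g'(0) = 0.\<close>
definition H0 :: "(complex \<Rightarrow> complex) \<Rightarrow> (complex \<Rightarrow> complex) \<Rightarrow> bool" where
  "H0 h g \<longleftrightarrow> h holomorphic_on ball 0 1 \<and> g holomorphic_on ball 0 1 \<and>
     h 0 = 0 \<and> deriv h 0 = 1 \<and> g 0 = 0 \<and> deriv g 0 = 0"

definition PH0 :: "real \<Rightarrow> (complex \<Rightarrow> complex) \<Rightarrow> (complex \<Rightarrow> complex) \<Rightarrow> bool" where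
  "PH0 \<alpha> h g \<longleftrightarrow> H0 h g \<and>
     (\<forall>z\<in>ball 0 1. Re (deriv h z - of_real \<alpha>) > norm (deriv g z))"

definition harm :: "(complex \<Rightarrow> complex) \<Rightarrow> (complex \<Rightarrow> complex) \<Rightarrow> complex \<Rightarrow> complex" where
  "harm h g z = h z + cnj (g z)"

definition f_ext :: "real \<Rightarrow> complex \<Rightarrow> complex" where
  "f_ext \<alpha> z = z + (\<Sum>n. of_real (2 * (1 - \<alpha>) / real (n + 2)) * z ^ (n + 2))"

end

theory Submission
  imports Defs
begin

text \<open>For \<open>|\<epsilon>| \<le> 1\<close> the function \<open>p = (h' + \<epsilon> g' - \<alpha>) / (1 - \<alpha>)\<close> has positive real part
  and \<open>p(0) = 1\<close>, so the Schwarz lemma applied to its Cayley transform \<open>(p - 1) / (p + 1)\<close> gives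
  the Harnack bounds \<open>(1 - r) / (1 + r) \<le> Re p\<close> and \<open>|p| \<le> (1 + r) / (1 - r)\<close> on \<open>|z| = r\<close>.
  Choosing the direction of \<open>\<epsilon>\<close> suitably, this yields
  \<open>Re h' - |g'| \<ge> \<alpha> + (1 - \<alpha>)(1 - r)/(1 + r)\<close> and \<open>|h'| + |g'| \<le> \<alpha> + (1 - \<alpha>)(1 + r)/(1 - r)\<close>.
  The right-hand sides are the derivatives of \<open>(2\<alpha> - 1) r + 2(1 - \<alpha>) log (1 + r)\<close> and
  \<open>(2\<alpha> - 1) r - 2(1 - \<alpha>) log (1 - r)\<close>, whose Taylor series are the two series of the statement;
  comparing derivatives along the radius from \<open>0\<close> to \<open>z\<close> bounds \<open>|f(z)|\<close> between them.
  The extremal function satisfies \<open>f\<^sub>\<alpha>(x) = (2\<alpha> - 1) x - 2(1 - \<alpha>) log (1 - x)\<close> for real \<open>x\<close>,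
  so it attains the upper bound at \<open>r\<close> and the lower one at \<open>-r\<close>.\<close>

lemma sums_minus_Ln_one_minus_tail:
  fixes z :: complex
  assumes "norm z < 1"
  shows "(\<lambda>n. z ^ (n + 2) / of_nat (n + 2)) sums (- Ln (1 - z) - z)"
proof -
  have "(\<lambda>n. - (z ^ n) / of_nat n) sums Ln (1 - z)"
    using Ln_series'[of "-z"] assms by simp
  hence "(\<lambda>n. - (z ^ (n + 2)) / of_nat (n + 2)) sums (Ln (1 - z) - (\<Sum>n<2. - (z ^ n) / of_nat n))"
    by (subst sums_iff_shift) simp
  hence "(\<lambda>n. - (- (z ^ (n + 2)) / of_nat (n + 2))) sums (- (Ln (1 - z) + z))"
    by (intro sums_minus) (simp add: eval_nat_numeral)
  thus ?thesis by simp
qed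

lemma sums_minus_ln_one_minus_tail:
  fixes x :: real
  assumes "\<bar>x\<bar> < 1"
  shows "(\<lambda>n. x ^ (n + 2) / real (n + 2)) sums (- ln (1 - x) - x)"
proof -
  have "Ln (1 - of_real x) = Ln (of_real (1 - x))"
    by simp
  also have "\<dots> = of_real (ln (1 - x))"
    using assms by (intro Ln_of_real) auto
  finally have "(\<lambda>n. of_real (x ^ (n + 2) / real (n + 2))) sums (of_real (- ln (1 - x) - x) :: complex)"
    using sums_minus_Ln_one_minus_tail[of "of_real x"] assms by simp
  thus ?thesis
    by (simp only: sums_of_real_iff)
qed

definition growth_upper :: "real \<Rightarrow> real \<Rightarrow> real" where
  "growth_upper \<alpha> t = (2 * \<alpha> - 1) * t - 2 * (1 - \<alpha>) * ln (1 - t)"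

definition growth_lower :: "real \<Rightarrow> real \<Rightarrow> real" where
  "growth_lower \<alpha> t = (2 * \<alpha> - 1) * t + 2 * (1 - \<alpha>) * ln (1 + t)"

lemma growth_lower_eq: "growth_lower \<alpha> t = - growth_upper \<alpha> (- t)"
  by (simp add: growth_lower_def growth_upper_def)

lemma growth_upper_sums:
  assumes "\<bar>t\<bar> < 1"
  shows "(\<lambda>n. 2 * (1 - \<alpha>) / real (n + 2) * t ^ (n + 2)) sums (growth_upper \<alpha> t - t)"
proof -
  have "(\<lambda>n. 2 * (1 - \<alpha>) * (t ^ (n + 2) / real (n + 2))) sums (2 * (1 - \<alpha>) * (- ln (1 - t) - t))"
    using sums_mult[OF sums_minus_ln_one_minus_tail[OF assms]] .
  thus ?thesis by (simp add: growth_upper_def algebra_simps)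
qed

lemma growth_lower_sums:
  assumes "\<bar>t\<bar> < 1"
  shows "(\<lambda>n. 2 * (1 - \<alpha>) * (-1) ^ (n + 1) / real (n + 2) * t ^ (n + 2)) sums (growth_lower \<alpha> t - t)"
proof -
  have "(\<lambda>n. - (2 * (1 - \<alpha>) / real (n + 2) * (- t) ^ (n + 2))) sums (- (growth_upper \<alpha> (- t) + t))"
    using sums_minus[OF growth_upper_sums[of "- t"]] assms by simp
  moreover have "(\<lambda>n. - (2 * (1 - \<alpha>) / real (n + 2) * (- t) ^ (n + 2)))
      = (\<lambda>n. 2 * (1 - \<alpha>) * (-1) ^ (n + 1) / real (n + 2) * t ^ (n + 2))"
    by (rule ext) (simp add: power_minus[of t])
  ultimately show ?thesis by (simp add: growth_lower_eq)
qed

lemma growth_upper_eq_suminf: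
  assumes "\<bar>t\<bar> < 1"
  shows "t + (\<Sum>n. 2 * (1 - \<alpha>) / real (n + 2) * t ^ (n + 2)) = growth_upper \<alpha> t"
  using sums_unique[OF growth_upper_sums[OF assms, where \<alpha> = \<alpha>]] by simp

lemma growth_lower_eq_suminf:
  assumes "\<bar>t\<bar> < 1"
  shows "t + (\<Sum>n. 2 * (1 - \<alpha>) * (-1) ^ (n + 1) / real (n + 2) * t ^ (n + 2)) = growth_lower \<alpha> t"
  using sums_unique[OF growth_lower_sums[OF assms, where \<alpha> = \<alpha>]] by simp

lemma Re_cayley_ge:
  fixes w :: complex
  assumes "norm w \<le> \<rho>" "\<rho> < 1"
  shows "(1 - \<rho>) / (1 + \<rho>) \<le> Re ((1 + w) / (1 - w))"
proof -
  define s where "s = norm w"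
  have s: "0 \<le> s" "s \<le> \<rho>" using assms by (auto simp: s_def)
  have "norm (1 - w) \<le> 1 + s" using norm_triangle_ineq4[of 1 w] by (simp add: s_def)
  moreover have "0 < norm (1 - w)" using assms by auto
  ultimately have den: "norm (1 - w) ^ 2 \<le> (1 + s) ^ 2" "0 < norm (1 - w) ^ 2"
    by (auto intro: power_mono)
  have "(1 - \<rho>) / (1 + \<rho>) \<le> (1 - s) / (1 + s)"
    using s assms by (simp add: field_simps)
  also have "\<dots> = ((1 - s) * (1 + s)) / ((1 + s) * (1 + s))"
    using s by simp
  also have "\<dots> = (1 - s ^ 2) / (1 + s) ^ 2"
    by (simp add: power2_eq_square algebra_simps)
  also have "\<dots> \<le> (1 - s ^ 2) / norm (1 - w) ^ 2"
    using den s assms by (intro divide_left_mono) (auto simp: power_le_one)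
  also have "1 - s ^ 2 = Re (1 + w) * Re (1 - w) + Im (1 + w) * Im (1 - w)"
    by (simp add: s_def cmod_power2) (simp add: power2_eq_square algebra_simps)
  also have "\<dots> / norm (1 - w) ^ 2 = Re ((1 + w) / (1 - w))"
    by (simp add: Re_divide cmod_power2)
  finally show ?thesis .
qed

lemma norm_cayley_le:
  fixes w :: complex
  assumes "norm w \<le> \<rho>" "\<rho> < 1"
  shows "norm ((1 + w) / (1 - w)) \<le> (1 + \<rho>) / (1 - \<rho>)"
proof -
  have "0 \<le> \<rho>" using assms(1) norm_ge_zero[of w] by linarith
  have "norm ((1 + w) / (1 - w)) = norm (1 + w) / norm (1 - w)"
    by (simp add: norm_divide)
  also have "\<dots> \<le> (1 + \<rho>) / (1 - \<rho>)"
    using assms \<open>0 \<le> \<rho>\<close> norm_triangle_ineq[of 1 w] norm_triangle_ineq2[of 1 w]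
    by (intro frac_le) auto
  finally show ?thesis .
qed

lemma holomorphic_Re_pos_bounds:
  assumes hol: "p holomorphic_on ball 0 1" and p0: "p 0 = 1"
    and pos: "\<And>z. z \<in> ball 0 1 \<Longrightarrow> 0 < Re (p z)" and w: "norm w < 1"
  shows "(1 - norm w) / (1 + norm w) \<le> Re (p w)"
    and "norm (p w) \<le> (1 + norm w) / (1 - norm w)"
proof -
  define \<omega> where "\<omega> z = (p z - 1) / (p z + 1)" for z
  have nz: "p z + 1 \<noteq> 0" if "z \<in> ball 0 1" for z
    using pos[OF that] by (auto simp: complex_eq_iff)
  have "\<omega> holomorphic_on ball 0 1"
    unfolding \<omega>_def using nz by (intro holomorphic_intros hol) auto
  moreover have "\<omega> 0 = 0" by (simp add: \<omega>_def p0)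
  moreover have "norm (\<omega> z) < 1" if "norm z < 1" for z
  proof -
    have "0 < Re (p z)" using pos that by simp
    hence "norm (p z - 1) < norm (p z + 1)"
      unfolding cmod_def
      by (auto intro!: real_sqrt_less_mono simp: power2_eq_square algebra_simps)
    thus ?thesis using nz that by (simp add: \<omega>_def norm_divide divide_less_eq)
  qed
  ultimately have schwarz: "norm (\<omega> w) \<le> norm w"
    using Schwarz_Lemma(1) w by blast
  have "(1 - \<omega> w) * p w = 1 + \<omega> w"
    using nz[of w] w by (simp add: \<omega>_def field_simps)
  moreover have "1 - \<omega> w \<noteq> 0"
    using schwarz w by auto
  ultimately have "p w = (1 + \<omega> w) / (1 - \<omega> w)"
    by (simp add: eq_divide_eq mult.commute)
  thus "(1 - norm w) / (1 + norm w) \<le> Re (p w)" "norm (p w) \<le> (1 + norm w) / (1 - norm w)"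
    using Re_cayley_ge[OF schwarz w] norm_cayley_le[OF schwarz w] by simp_all
qed

lemma cnj_sgn_mult_self: "cnj (sgn w) * w = of_real (norm w)"
proof (cases "w = 0")
  case False
  have "cnj w * w = of_real (norm w) * of_real (norm w)"
    by (simp add: mult.commute flip: complex_norm_square of_real_mult power2_eq_square)
  with False show ?thesis
    by (simp add: sgn_div_norm scaleR_conv_of_real mult.assoc)
qed simp

lemma sgn_mult_norm_complex: "sgn w * of_real (norm w) = (w :: complex)"
  by (cases "w = 0") (simp_all add: sgn_div_norm scaleR_conv_of_real)

lemma PH0_deriv_combination_bounds:
  assumes "\<alpha> < 1" and P: "PH0 \<alpha> h g" and w: "norm w < 1" and \<epsilon>: "norm \<epsilon> \<le> 1"
  shows "\<alpha> + (1 - \<alpha>) * ((1 - norm w) / (1 + norm w)) \<le> Re (deriv h w + \<epsilon> * deriv g w)"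
    and "norm (deriv h w + \<epsilon> * deriv g w - \<alpha>) \<le> (1 - \<alpha>) * ((1 + norm w) / (1 - norm w))"
proof -
  have hol: "h holomorphic_on ball 0 1" "g holomorphic_on ball 0 1"
    and d0: "deriv h 0 = 1" "deriv g 0 = 0"
    and pos: "\<And>z. z \<in> ball 0 1 \<Longrightarrow> norm (deriv g z) < Re (deriv h z - \<alpha>)"
    using P by (auto simp: PH0_def H0_def)
  define p where "p z = (deriv h z + \<epsilon> * deriv g z - \<alpha>) / of_real (1 - \<alpha>)" for z
  have "p holomorphic_on ball 0 1"
    unfolding p_def using assms(1) by (intro holomorphic_intros holomorphic_deriv hol) auto
  moreover have "p 0 = 1"
    using assms(1) by (simp add: p_def d0)
  moreover have "0 < Re (p z)" if "z \<in> ball 0 1" for z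
  proof -
    have "- Re (\<epsilon> * deriv g z) \<le> norm (\<epsilon> * deriv g z)"
      using abs_Re_le_cmod[of "\<epsilon> * deriv g z"] by linarith
    also have "\<dots> \<le> norm (deriv g z)"
      using \<epsilon> by (simp add: norm_mult mult_left_le_one_le)
    finally show ?thesis
      using pos[OF that] assms(1) by (simp add: p_def)
  qed
  ultimately have Re_p: "(1 - norm w) / (1 + norm w) \<le> Re (p w)"
    and norm_p: "norm (p w) \<le> (1 + norm w) / (1 - norm w)"
    using holomorphic_Re_pos_bounds w by blast+
  have "Re (p w) = (Re (deriv h w + \<epsilon> * deriv g w) - \<alpha>) / (1 - \<alpha>)"
    by (simp add: p_def)
  with Re_p assms(1)
  show "\<alpha> + (1 - \<alpha>) * ((1 - norm w) / (1 + norm w)) \<le> Re (deriv h w + \<epsilon> * deriv g w)"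
    by (simp add: le_divide_eq mult.commute)
  have "norm (1 - of_real \<alpha> :: complex) = 1 - \<alpha>"
    using assms(1) by (metis abs_of_pos diff_gt_0_iff_gt norm_of_real of_real_1 of_real_diff)
  hence "norm (p w) = norm (deriv h w + \<epsilon> * deriv g w - \<alpha>) / (1 - \<alpha>)"
    by (simp add: p_def norm_divide)
  with norm_p assms(1)
  show "norm (deriv h w + \<epsilon> * deriv g w - \<alpha>) \<le> (1 - \<alpha>) * ((1 + norm w) / (1 - norm w))"
    by (simp add: divide_le_eq mult.commute)
qed

lemma PH0_deriv_bounds:
  assumes "0 \<le> \<alpha>" "\<alpha> < 1" and P: "PH0 \<alpha> h g" and w: "norm w < 1"
  shows "\<alpha> + (1 - \<alpha>) * ((1 - norm w) / (1 + norm w)) \<le> Re (deriv h w) - norm (deriv g w)"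
    and "norm (deriv h w) + norm (deriv g w) \<le> \<alpha> + (1 - \<alpha>) * ((1 + norm w) / (1 - norm w))"
proof -
  have "norm (- cnj (sgn (deriv g w))) \<le> 1"
    by (simp add: norm_sgn)
  from PH0_deriv_combination_bounds(1)[OF assms(2) P w this]
  show "\<alpha> + (1 - \<alpha>) * ((1 - norm w) / (1 + norm w)) \<le> Re (deriv h w) - norm (deriv g w)"
    by (simp only: mult_minus_left cnj_sgn_mult_self) simp
  define H G where "H = deriv h w" and "G = deriv g w"
  have "norm G < Re (H - \<alpha>)"
    using P w by (simp add: PH0_def H_def G_def)
  hence "H \<noteq> 0"
    using assms(1) norm_ge_zero[of G] by (cases "H = 0") simp_all
  have "H + sgn H * cnj (sgn G) * G = sgn H * of_real (norm H + norm G)"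
    using \<open>H \<noteq> 0\<close>
    by (simp add: mult.assoc cnj_sgn_mult_self distrib_left sgn_mult_norm_complex)
  hence "norm (H + sgn H * cnj (sgn G) * G) = norm H + norm G"
    using \<open>H \<noteq> 0\<close> by (simp add: norm_mult norm_sgn del: of_real_add)
  moreover have "norm (H + sgn H * cnj (sgn G) * G) \<le> norm (H + sgn H * cnj (sgn G) * G - \<alpha>) + \<alpha>"
    using norm_triangle_ineq[of "H + sgn H * cnj (sgn G) * G - \<alpha>" "of_real \<alpha>"] assms(1) by simp
  moreover have "norm (sgn H * cnj (sgn G)) \<le> 1"
    by (simp add: norm_mult norm_sgn)
  ultimately show "norm (deriv h w) + norm (deriv g w) \<le> \<alpha> + (1 - \<alpha>) * ((1 + norm w) / (1 - norm w))"
    using PH0_deriv_combination_bounds(2)[OF assms(2) P w, of "sgn H * cnj (sgn G)"]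
    by (simp add: H_def G_def)
qed

lemma growth_lower_has_derivative:
  assumes "-1 < t"
  shows "(growth_lower \<alpha> has_real_derivative \<alpha> + (1 - \<alpha>) * ((1 - t) / (1 + t))) (at t)"
proof -
  have "(growth_lower \<alpha> has_real_derivative (2 * \<alpha> - 1) + 2 * (1 - \<alpha>) * (1 / (1 + t))) (at t)"
    unfolding growth_lower_def using assms by (auto intro!: derivative_eq_intros)
  thus ?thesis
    by (rule DERIV_cong) (use assms in \<open>simp add: field_simps\<close>)
qed

lemma growth_upper_has_derivative:
  assumes "t < 1"
  shows "(growth_upper \<alpha> has_real_derivative \<alpha> + (1 - \<alpha>) * ((1 + t) / (1 - t))) (at t)"
proof -
  have "(growth_upper \<alpha> has_real_derivative (2 * \<alpha> - 1) + 2 * (1 - \<alpha>) * (1 / (1 - t))) (at t)"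
    unfolding growth_upper_def using assms by (auto intro!: derivative_eq_intros)
  thus ?thesis
    by (rule DERIV_cong) (use assms in \<open>simp add: field_simps\<close>)
qed

lemma exists_unimodular_polar:
  fixes z :: complex
  shows "\<exists>u. norm u = 1 \<and> z = of_real (norm z) * u"
proof (cases "z = 0")
  case False
  thus ?thesis
    using sgn_mult_norm_complex[of z] by (intro exI[of _ "sgn z"]) (simp add: norm_sgn mult.commute)
qed (auto intro!: exI[of _ 1])

lemma Re_rotated_ge:
  assumes "norm u = 1"
  shows "Re a - norm b \<le> Re (cnj u * (u * a + cnj (u * b)))"
proof -
  have "cnj u * u = 1"
    using assms by (simp add: mult.commute flip: complex_norm_square)
  hence "cnj u * (u * a + cnj (u * b)) = a + cnj (u * u * b)"
    by (simp add: algebra_simps)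
  moreover have "- Re (cnj (u * u * b)) \<le> norm b"
    using abs_Re_le_cmod[of "cnj (u * u * b)"] assms by (simp add: norm_mult)
  ultimately show ?thesis by simp
qed

lemma Re_rotated_le:
  assumes "norm c \<le> 1" and "norm u = 1"
  shows "Re (c * (u * a + cnj (u * b))) \<le> norm a + norm b"
proof -
  have "Re (c * (u * a + cnj (u * b))) \<le> norm (c * (u * a + cnj (u * b)))"
    by (rule complex_Re_le_cmod)
  also have "\<dots> \<le> norm (u * a + cnj (u * b))"
    using assms(1) by (simp add: norm_mult mult_left_le_one_le)
  also have "\<dots> \<le> norm a + norm b"
    using norm_triangle_ineq[of "u * a" "cnj (u * b)"] assms(2) by (simp add: norm_mult)
  finally show ?thesis .
qed

lemma harm_radial_has_derivative:
  assumes "h holomorphic_on ball 0 1" "g holomorphic_on ball 0 1"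
    and "norm u = 1" and "\<bar>t\<bar> < 1"
  shows "((\<lambda>t. Re (c * harm h g (of_real t * u))) has_real_derivative
            Re (c * (u * deriv h (of_real t * u) + cnj (u * deriv g (of_real t * u))))) (at t)"
proof -
  have inb: "of_real t * u \<in> ball 0 1"
    using assms(3,4) by (simp add: norm_mult)
  have ray: "((\<lambda>t. of_real t * u) has_vector_derivative u) (at t)"
    by (auto intro!: derivative_eq_intros)
  have "((\<lambda>t. h (of_real t * u)) has_vector_derivative u * deriv h (of_real t * u)) (at t)"
    "((\<lambda>t. g (of_real t * u)) has_vector_derivative u * deriv g (of_real t * u)) (at t)"
    using field_vector_diff_chain_at[OF ray holomorphic_derivI[OF assms(1) open_ball inb]]
      field_vector_diff_chain_at[OF ray holomorphic_derivI[OF assms(2) open_ball inb]]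
    by (simp_all add: o_def)
  hence "((\<lambda>t. c * harm h g (of_real t * u)) has_vector_derivative
          c * (u * deriv h (of_real t * u) + cnj (u * deriv g (of_real t * u)))) (at t)"
    unfolding harm_def
    by (intro has_vector_derivative_mult_right has_vector_derivative_add has_vector_derivative_cnj)
  thus ?thesis
    by (rule has_field_derivative_Re)
qed

lemma harm_norm_ge_growth_lower:
  assumes "0 \<le> \<alpha>" "\<alpha> < 1" and P: "PH0 \<alpha> h g" and z: "norm z < 1"
  shows "growth_lower \<alpha> (norm z) \<le> norm (harm h g z)"
proof -
  have hol: "h holomorphic_on ball 0 1" "g holomorphic_on ball 0 1"
    and "h 0 = 0" "g 0 = 0"
    using P by (auto simp: PH0_def H0_def)
  obtain u where u: "norm u = 1" "z = of_real (norm z) * u"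
    using exists_unimodular_polar by blast
  \<comment> \<open>\<open>\<phi>\<close> is dominated by \<open>|f|\<close> and its derivative along the ray is at least \<open>Re h' - |g'|\<close>\<close>
  define \<phi> where "\<phi> t = Re (cnj u * harm h g (of_real t * u))" for t
  have "\<phi> 0 - growth_lower \<alpha> 0 \<le> \<phi> (norm z) - growth_lower \<alpha> (norm z)"
  proof (rule DERIV_nonneg_imp_nondecreasing[OF norm_ge_zero])
    fix t assume t: "0 \<le> t" "t \<le> norm z"
    define w where "w = of_real t * u"
    have "norm w = t" "norm w < 1"
      using t z u(1) by (simp_all add: w_def norm_mult)
    hence "\<alpha> + (1 - \<alpha>) * ((1 - t) / (1 + t)) \<le> Re (deriv h w) - norm (deriv g w)"
      using PH0_deriv_bounds(1)[OF assms(1,2) P] by metis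
    also have "\<dots> \<le> Re (cnj u * (u * deriv h w + cnj (u * deriv g w)))"
      by (rule Re_rotated_ge[OF u(1)])
    finally have "\<alpha> + (1 - \<alpha>) * ((1 - t) / (1 + t)) \<le> Re (cnj u * (u * deriv h w + cnj (u * deriv g w)))" .
    moreover have "((\<lambda>t. \<phi> t - growth_lower \<alpha> t) has_real_derivative
        Re (cnj u * (u * deriv h w + cnj (u * deriv g w))) - (\<alpha> + (1 - \<alpha>) * ((1 - t) / (1 + t)))) (at t)"
      unfolding \<phi>_def w_def using t z
      by (intro DERIV_diff harm_radial_has_derivative[OF hol u(1)] growth_lower_has_derivative) auto
    ultimately show "\<exists>y. ((\<lambda>t. \<phi> t - growth_lower \<alpha> t) has_real_derivative y) (at t) \<and> 0 \<le> y"
      by auto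
  qed
  moreover have "\<phi> 0 = 0" "growth_lower \<alpha> 0 = 0"
    by (simp_all add: \<phi>_def harm_def growth_lower_def \<open>h 0 = 0\<close> \<open>g 0 = 0\<close>)
  moreover have "\<phi> (norm z) \<le> norm (harm h g z)"
    using complex_Re_le_cmod[of "cnj u * harm h g z"] u by (simp add: \<phi>_def norm_mult)
  ultimately show ?thesis by linarith
qed

lemma harm_norm_le_growth_upper:
  assumes "0 \<le> \<alpha>" "\<alpha> < 1" and P: "PH0 \<alpha> h g" and z: "norm z < 1"
  shows "norm (harm h g z) \<le> growth_upper \<alpha> (norm z)"
proof -
  have hol: "h holomorphic_on ball 0 1" "g holomorphic_on ball 0 1"
    and "h 0 = 0" "g 0 = 0"
    using P by (auto simp: PH0_def H0_def)
  obtain u where u: "norm u = 1" "z = of_real (norm z) * u"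
    using exists_unimodular_polar by blast
  define c where "c = cnj (sgn (harm h g z))"
  have c: "norm c \<le> 1"
    by (simp add: c_def norm_sgn)
  define \<phi> where "\<phi> t = Re (c * harm h g (of_real t * u))" for t
  have "growth_upper \<alpha> 0 - \<phi> 0 \<le> growth_upper \<alpha> (norm z) - \<phi> (norm z)"
  proof (rule DERIV_nonneg_imp_nondecreasing[OF norm_ge_zero])
    fix t assume t: "0 \<le> t" "t \<le> norm z"
    define w where "w = of_real t * u"
    have "norm w = t" "norm w < 1"
      using t z u(1) by (simp_all add: w_def norm_mult)
    hence "norm (deriv h w) + norm (deriv g w) \<le> \<alpha> + (1 - \<alpha>) * ((1 + t) / (1 - t))"
      using PH0_deriv_bounds(2)[OF assms(1,2) P] by metis
    with Re_rotated_le[OF c u(1)]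
    have "Re (c * (u * deriv h w + cnj (u * deriv g w))) \<le> \<alpha> + (1 - \<alpha>) * ((1 + t) / (1 - t))"
      by (rule order_trans)
    moreover have "((\<lambda>t. growth_upper \<alpha> t - \<phi> t) has_real_derivative
        (\<alpha> + (1 - \<alpha>) * ((1 + t) / (1 - t))) - Re (c * (u * deriv h w + cnj (u * deriv g w)))) (at t)"
      unfolding \<phi>_def w_def using t z
      by (intro DERIV_diff harm_radial_has_derivative[OF hol u(1)] growth_upper_has_derivative) auto
    ultimately show "\<exists>y. ((\<lambda>t. growth_upper \<alpha> t - \<phi> t) has_real_derivative y) (at t) \<and> 0 \<le> y"
      by auto
  qed
  moreover have "\<phi> 0 = 0" "growth_upper \<alpha> 0 = 0"
    by (simp_all add: \<phi>_def harm_def growth_upper_def \<open>h 0 = 0\<close> \<open>g 0 = 0\<close>)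
  moreover have "\<phi> (norm z) = norm (harm h g z)"
    using u by (simp add: \<phi>_def c_def cnj_sgn_mult_self flip: u(2))
  ultimately show ?thesis by linarith
qed

lemma f_ext_of_real:
  assumes "\<bar>x\<bar> < 1"
  shows "f_ext \<alpha> (of_real x) = of_real (growth_upper \<alpha> x)"
proof -
  have "(\<lambda>n. of_real (2 * (1 - \<alpha>) / real (n + 2) * x ^ (n + 2)) :: complex)
      sums of_real (growth_upper \<alpha> x - x)"
    by (rule sums_of_real[OF growth_upper_sums[OF assms]])
  hence "(\<lambda>n. of_real (2 * (1 - \<alpha>) / real (n + 2)) * of_real x ^ (n + 2))
      sums (of_real (growth_upper \<alpha> x) - of_real x :: complex)"
    by (simp only: of_real_mult of_real_power of_real_diff)
  thus ?thesis
    by (simp add: f_ext_def sums_iff)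
qed

lemma f_ext_eq_Ln:
  assumes "norm z < 1"
  shows "f_ext \<alpha> z = z + of_real (2 * (1 - \<alpha>)) * (- Ln (1 - z) - z)"
proof -
  have "(\<lambda>n. of_real (2 * (1 - \<alpha>)) * (z ^ (n + 2) / of_nat (n + 2)))
      sums (of_real (2 * (1 - \<alpha>)) * (- Ln (1 - z) - z))"
    by (rule sums_mult[OF sums_minus_Ln_one_minus_tail[OF assms]])
  thus ?thesis
    by (simp add: f_ext_def sums_iff)
qed

lemma f_ext_has_field_derivative:
  assumes "norm z < 1"
  shows "(f_ext \<alpha> has_field_derivative 1 + of_real (2 * (1 - \<alpha>)) * (1 / (1 - z) - 1)) (at z)"
proof -
  have "0 < Re (1 - z)"
    using assms abs_Re_le_cmod[of z] by simp
  hence "1 - z \<notin> \<real>\<^sub>\<le>\<^sub>0"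
    by (auto simp: complex_nonpos_Reals_iff)
  hence "((\<lambda>z. z + of_real (2 * (1 - \<alpha>)) * (- Ln (1 - z) - z)) has_field_derivative
      1 + of_real (2 * (1 - \<alpha>)) * (1 / (1 - z) - 1)) (at z)"
    by (auto intro!: derivative_eq_intros simp: divide_inverse)
  thus ?thesis
    by (rule has_field_derivative_transform_within_open[where S = "ball 0 1"])
       (use assms f_ext_eq_Ln in auto)
qed

lemma Re_inverse_one_minus_gt_half:
  fixes z :: complex
  assumes "norm z < 1"
  shows "1 / 2 < Re (1 / (1 - z))"
proof -
  have "norm (1 - z) ^ 2 = 1 - 2 * Re z + norm z ^ 2"
    unfolding cmod_power2 by (simp add: power2_eq_square algebra_simps)
  also have "\<dots> < 2 * (1 - Re z)"
    using assms by (simp add: power_less_one_iff abs_square_less_1)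
  finally have "norm (1 - z) ^ 2 / 2 < 1 - Re z"
    by simp
  moreover have "Re (1 / (1 - z)) = (1 - Re z) / norm (1 - z) ^ 2"
    by (simp add: Re_divide cmod_power2)
  moreover have "0 < norm (1 - z) ^ 2"
    using assms by auto
  ultimately show ?thesis
    by (simp add: less_divide_eq)
qed

lemma f_ext_PH0:
  assumes "\<alpha> < 1"
  shows "PH0 \<alpha> (f_ext \<alpha>) (\<lambda>_. 0)"
proof -
  have deriv: "deriv (f_ext \<alpha>) z = 1 + of_real (2 * (1 - \<alpha>)) * (1 / (1 - z) - 1)" if "norm z < 1" for z
    using DERIV_imp_deriv[OF f_ext_has_field_derivative[OF that]] .
  have "f_ext \<alpha> holomorphic_on ball 0 1"
    using f_ext_has_field_derivative by (fastforce simp: holomorphic_on_open)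
  moreover have "0 < Re (deriv (f_ext \<alpha>) z - \<alpha>)" if "z \<in> ball 0 1" for z
  proof -
    define q where "q = 1 / (1 - z)"
    have "deriv (f_ext \<alpha>) z - \<alpha> = of_real (1 - \<alpha>) * (2 * q - 1)"
      using that by (simp add: deriv flip: q_def) (simp add: algebra_simps)
    hence "Re (deriv (f_ext \<alpha>) z - \<alpha>) = (1 - \<alpha>) * (2 * Re q - 1)"
      by simp
    thus ?thesis
      using Re_inverse_one_minus_gt_half[of z] that assms by (simp add: q_def)
  qed
  ultimately show ?thesis
    using deriv[of 0] by (simp add: PH0_def H0_def f_ext_def)
qed

lemma growth_lower_nonneg:
  assumes "0 \<le> \<alpha>" "\<alpha> < 1" "0 \<le> r" "r < 1"
  shows "0 \<le> growth_lower \<alpha> r"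
proof -
  have "growth_lower \<alpha> 0 \<le> growth_lower \<alpha> r"
  proof (rule DERIV_nonneg_imp_nondecreasing[OF assms(3)])
    fix t assume "0 \<le> t" "t \<le> r"
    with assms show "\<exists>y. (growth_lower \<alpha> has_real_derivative y) (at t) \<and> 0 \<le> y"
      by (intro exI[of _ "\<alpha> + (1 - \<alpha>) * ((1 - t) / (1 + t))"] conjI growth_lower_has_derivative) auto
  qed
  thus ?thesis by (simp add: growth_lower_def)
qed

lemma growth_upper_nonneg:
  assumes "0 \<le> \<alpha>" "\<alpha> < 1" "0 \<le> r" "r < 1"
  shows "0 \<le> growth_upper \<alpha> r"
proof -
  have "growth_upper \<alpha> 0 \<le> growth_upper \<alpha> r"
  proof (rule DERIV_nonneg_imp_nondecreasing[OF assms(3)])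
    fix t assume "0 \<le> t" "t \<le> r"
    with assms show "\<exists>y. (growth_upper \<alpha> has_real_derivative y) (at t) \<and> 0 \<le> y"
      by (intro exI[of _ "\<alpha> + (1 - \<alpha>) * ((1 + t) / (1 - t))"] conjI growth_upper_has_derivative) auto
  qed
  thus ?thesis by (simp add: growth_upper_def)
qed

lemma norm_f_ext_of_real:
  assumes "0 \<le> \<alpha>" "\<alpha> < 1" "0 \<le> r" "r < 1"
  shows "norm (f_ext \<alpha> (of_real r)) = growth_upper \<alpha> r"
  using f_ext_of_real[of r \<alpha>] growth_upper_nonneg[OF assms] assms by simp

lemma norm_f_ext_minus_of_real:
  assumes "0 \<le> \<alpha>" "\<alpha> < 1" "0 \<le> r" "r < 1"
  shows "norm (f_ext \<alpha> (- of_real r)) = growth_lower \<alpha> r"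
proof -
  have "f_ext \<alpha> (- of_real r) = - of_real (growth_lower \<alpha> r)"
    using f_ext_of_real[of "- r" \<alpha>] assms by (simp add: growth_lower_eq)
  thus ?thesis
    using growth_lower_nonneg[OF assms] by simp
qed

theorem theorem2p1:
  fixes \<alpha> :: real and h g :: "complex \<Rightarrow> complex"
  assumes "0 \<le> \<alpha>" and "\<alpha> < 1" and "PH0 \<alpha> h g"
  shows "(\<forall>z\<in>ball 0 1.
           norm z + (\<Sum>n. 2 * (1 - \<alpha>) * (-1) ^ (n + 1) / real (n + 2) * norm z ^ (n + 2))
             \<le> norm (harm h g z) \<and>
           norm (harm h g z)
             \<le> norm z + (\<Sum>n. 2 * (1 - \<alpha>) / real (n + 2) * norm z ^ (n + 2))) \<and>
         PH0 \<alpha> (f_ext \<alpha>) (\<lambda>_. 0) \<and>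
         (\<forall>r::real. 0 \<le> r \<and> r < 1 \<longrightarrow>
           norm (harm (f_ext \<alpha>) (\<lambda>_. 0) (of_real r))
             = r + (\<Sum>n. 2 * (1 - \<alpha>) / real (n + 2) * r ^ (n + 2)) \<and>
           norm (harm (f_ext \<alpha>) (\<lambda>_. 0) (- of_real r))
             = r + (\<Sum>n. 2 * (1 - \<alpha>) * (-1) ^ (n + 1) / real (n + 2) * r ^ (n + 2)))"
proof (intro conjI ballI allI impI)
  fix z :: complex assume "z \<in> ball 0 1"
  hence z: "norm z < 1" by simp
  show "norm z + (\<Sum>n. 2 * (1 - \<alpha>) * (-1) ^ (n + 1) / real (n + 2) * norm z ^ (n + 2))
      \<le> norm (harm h g z)"
    using harm_norm_ge_growth_lower[OF assms z] growth_lower_eq_suminf[of "norm z" \<alpha>] z by simp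
  show "norm (harm h g z) \<le> norm z + (\<Sum>n. 2 * (1 - \<alpha>) / real (n + 2) * norm z ^ (n + 2))"
    using harm_norm_le_growth_upper[OF assms z] growth_upper_eq_suminf[of "norm z" \<alpha>] z by simp
next
  show "PH0 \<alpha> (f_ext \<alpha>) (\<lambda>_. 0)"
    using f_ext_PH0[OF assms(2)] .
next
  fix r :: real assume r: "0 \<le> r \<and> r < 1"
  show "norm (harm (f_ext \<alpha>) (\<lambda>_. 0) (of_real r))
      = r + (\<Sum>n. 2 * (1 - \<alpha>) / real (n + 2) * r ^ (n + 2))"
    using norm_f_ext_of_real[of \<alpha> r] growth_upper_eq_suminf[of r \<alpha>] assms r
    by (simp add: harm_def)
  show "norm (harm (f_ext \<alpha>) (\<lambda>_. 0) (- of_real r))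
      = r + (\<Sum>n. 2 * (1 - \<alpha>) * (-1) ^ (n + 1) / real (n + 2) * r ^ (n + 2))"
    using norm_f_ext_minus_of_real[of \<alpha> r] growth_lower_eq_suminf[of r \<alpha>] assms r
    by (simp add: harm_def)
qed

end
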